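(* Given any ILPDC $C$ and any ILFST $T$, there is an ILPDC $N$ such that $N(x)=C(T(x))$ for all $x\in\{0,1\}^*$. Similarly, given any ILUPDC $C$ and any ILFST $T$, there is an ILUPDC $N$ such that $N(x)=C(T(x))$ for all $x\in\{0,1\}^*$.
   Context: A finite-state transducer (FST) is $T=(Q,q_0,\delta,\nu)$ with finite state set $Q$, start state $q_0$, transition function $\delta:Q\times\{0,1\}\to Q$ and output function $\nu:Q\times\{0,1\}\to\{0,1\}^*$; with $\hat\delta$ the extended transition function, $T(\lambda)=\lambda$ and $T(xb)=T(x)\nu(\hat\delta(x),b)$. $T$ is information lossless (an ILFST) if $x\mapsto(T(x),\hat\delta(x))$ is injective. A pushdown compressor (PDC) is a tuple $C=(Q,\Gamma,\delta,\nu,q_0,z_0,c)$ where $Q$ is a finite nonempty set of states, $\Gamma=\{0,1,z_0\}$ is the stack alphabet with $z_0$ the bottom-of-stack symbol, $\delta: Q\times(\{0,1\}\cup\{\lambda\})\times\Gamma\to Q\times\Gamma^*$ is a partial transition function, $\nu: Q\times(\{0,1\}\cup\{\lambda\})\times\Gamma\to\{0,1\}^*$ is the output function, $q_0$ is the start state, and $c\in\mathbb{N}$ bounds the number of consecutive $\lambda$-transitions (transitions reading no input bit, which pop the top stack symbol and output nothing). On each transition the top stack symbol is replaced by the string given by $\delta$; $z_0$ is never removed. Determinism: for each state $q$ and top symbol $a$, either $\delta(q,\lambda,a)$ is undefined or $\delta(q,b,a)$ is undefined for both $b\in\{0,1\}$. After each input bit all available $\lambda$-transitions are performed. $C(w)$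 denotes the output on input $w$ from $q_0$ with stack $z_0$, and $\delta_Q(w)$ the resulting state. $C$ is information lossless (ILPDC) if $w\mapsto (C(w),\delta_Q(w))$ is injective. A unary-stack PDC (UPDC) is identical but with stack alphabet $\{0,z_0\}$; information lossless ones are ILUPDCs. The constant $c$ of $N$ may differ from that of $C$. *)

theory Defs
  imports Main
begin

(* Bits are booleans (False = 0, True = 1); strings over {0,1} are bool lists.
   State sets are finite sets of natural numbers (w.l.o.g.). *)

record fst =
  f_states :: "nat set"
  f_start  :: nat
  f_delta  :: "nat \<Rightarrow> bool \<Rightarrow> nat"
  f_nu     :: "nat \<Rightarrow> bool \<Rightarrow> bool list"

definition fst_wf :: "fst \<Rightarrow> bool" where
  "fst_wf T \<longleftrightarrow> finite (f_states T) \<and> f_start T \<in> f_states T \<and>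
     (\<forall>q\<in>f_states T. \<forall>b. f_delta T q b \<in> f_states T)"

definition fst_run :: "fst \<Rightarrow> bool list \<Rightarrow> nat \<times> bool list" where
  "fst_run T x = foldl (\<lambda>(q, out) b. (f_delta T q b, out @ f_nu T q b)) (f_start T, []) x"

definition fst_state :: "fst \<Rightarrow> bool list \<Rightarrow> nat" where
  "fst_state T x = fst (fst_run T x)"

definition fst_out :: "fst \<Rightarrow> bool list \<Rightarrow> bool list" where
  "fst_out T x = snd (fst_run T x)"

definition ILFST :: "fst \<Rightarrow> bool" where
  "ILFST T \<longleftrightarrow> fst_wf T \<and> inj (\<lambda>x. (fst_out T x, fst_state T x))"

datatype sym = S0 | S1 | Z0

(* input None = lambda; stack is a list with the top at the head *)
record pdc =
  p_states :: "nat set"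
  p_start  :: nat
  p_delta  :: "nat \<Rightarrow> bool option \<Rightarrow> sym \<Rightarrow> (nat \<times> sym list) option"
  p_nu     :: "nat \<Rightarrow> bool option \<Rightarrow> sym \<Rightarrow> bool list"
  p_c      :: nat

type_synonym config = "nat \<times> sym list \<times> bool list"  (* state, stack, output so far *)

definition pdc_structural :: "pdc \<Rightarrow> bool" where
  "pdc_structural C \<longleftrightarrow>
     finite (p_states C) \<and> p_start C \<in> p_states C \<and>
     (\<forall>q\<in>p_states C. \<forall>i a q' g. p_delta C q i a = Some (q', g) \<longrightarrow> q' \<in> p_states C) \<and>
     \<comment> \<open>z0 is never removed and only occurs at the bottom\<close>
     (\<forall>q i q' g. p_delta C q i Z0 = Some (q', g) \<longrightarrow>
         g \<noteq> [] \<and> last g = Z0 \<and> Z0 \<notin> set (butlast g)) \<and>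
     (\<forall>q i a q' g. a \<noteq> Z0 \<longrightarrow> p_delta C q i a = Some (q', g) \<longrightarrow> Z0 \<notin> set g) \<and>
     \<comment> \<open>lambda-transitions pop the top symbol and output nothing\<close>
     (\<forall>q a q' g. p_delta C q None a = Some (q', g) \<longrightarrow> a \<noteq> Z0 \<and> g = []) \<and>
     (\<forall>q a. p_delta C q None a \<noteq> None \<longrightarrow> p_nu C q None a = []) \<and>
     \<comment> \<open>determinism\<close>
     (\<forall>q a b. p_delta C q None a \<noteq> None \<longrightarrow> p_delta C q (Some b) a = None)"

fun pdc_step :: "pdc \<Rightarrow> bool option \<Rightarrow> config \<Rightarrow> config option" where
  "pdc_step C i (q, [], out) = None"
| "pdc_step C i (q, a # r, out) =
     (case p_delta C q i a of
        None \<Rightarrow> None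
      | Some (q', g) \<Rightarrow> Some (q', g @ r, out @ p_nu C q i a))"

fun lam_close :: "pdc \<Rightarrow> nat \<Rightarrow> config \<Rightarrow> config" where
  "lam_close C 0 cfg = cfg"
| "lam_close C (Suc k) cfg =
     (case pdc_step C None cfg of None \<Rightarrow> cfg | Some cfg' \<Rightarrow> lam_close C k cfg')"

(* Run on an input word: after each input bit all available lambda-transitions are
   performed; the run is undefined (None) if an input transition is undefined or if more
   than c consecutive lambda-transitions would be needed. *)
definition pdc_run :: "pdc \<Rightarrow> bool list \<Rightarrow> config option" where
  "pdc_run C w = foldl (\<lambda>oc b. case oc of None \<Rightarrow> None
       | Some cfg \<Rightarrow> (case pdc_step C (Some b) cfg of None \<Rightarrow> None
           | Some cfg1 \<Rightarrow> (let cfg2 = lam_close C (p_c C) cfg1 in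
                if pdc_step C None cfg2 = None then Some cfg2 else None)))
     (Some (p_start C, [Z0], [])) w"

definition is_pdc :: "pdc \<Rightarrow> bool" where
  "is_pdc C \<longleftrightarrow> pdc_structural C \<and> (\<forall>w. pdc_run C w \<noteq> None)"

definition pdc_out :: "pdc \<Rightarrow> bool list \<Rightarrow> bool list" where
  "pdc_out C w = (case pdc_run C w of Some (q, s, out) \<Rightarrow> out | None \<Rightarrow> [])"

definition pdc_state :: "pdc \<Rightarrow> bool list \<Rightarrow> nat" where
  "pdc_state C w = (case pdc_run C w of Some (q, s, out) \<Rightarrow> q | None \<Rightarrow> p_start C)"

definition ILPDC :: "pdc \<Rightarrow> bool" where
  "ILPDC C \<longleftrightarrow> is_pdc C \<and> inj (\<lambda>w. (pdc_out C w, pdc_state C w))"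

(* unary stack: stack alphabet {0, z0}, i.e. the symbol 1 is never pushed *)
definition is_updc :: "pdc \<Rightarrow> bool" where
  "is_updc C \<longleftrightarrow> is_pdc C \<and> (\<forall>q i a q' g. p_delta C q i a = Some (q', g) \<longrightarrow> S1 \<notin> set g)"

definition ILUPDC :: "pdc \<Rightarrow> bool" where
  "ILUPDC C \<longleftrightarrow> is_updc C \<and> inj (\<lambda>w. (pdc_out C w, pdc_state C w))"

end

theory Submission
  imports Defs "HOL-Library.Countable"
begin

(* The composed compressor N runs T and C side by side. If T emits at most L bits per input
   bit, then C removes at most L (c + 1) symbols from its stack while reading one such block.
   So N keeps the top M = L (c + 1) symbols of the stack of C (or all of them above the
   bottom) in a buffer in its finite control, runs C on the block within the buffer, pushes
   the resulting new stack top and refills the buffer by at most M lambda-transitions. Then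
   N(x) = C(T(x)), and the state of N records the states of T and C. As C is information
   lossless, N(x) and the state of C determine T(x); as T is, T(x) and the state of T
   determine x. N pushes only what C pushes, so its stack is unary if that of C is. *)

instance sym :: countable by countable_datatype

lemma UNIV_sym: "UNIV = {S0, S1, Z0}"
  using sym.exhaust by auto

instance sym :: finite
  by standard (simp add: UNIV_sym)

definition wf_stack :: "sym list \<Rightarrow> bool" where
  "wf_stack s \<longleftrightarrow> s \<noteq> [] \<and> last s = Z0 \<and> Z0 \<notin> set (butlast s)"

lemma wf_stack_Cons_iff:
  "wf_stack (a # rest) \<longleftrightarrow> (if a = Z0 then rest = [] else wf_stack rest)"
  unfolding wf_stack_def by (cases rest) auto

lemma wf_stack_append:
  "ys \<noteq> [] \<Longrightarrow> wf_stack (xs @ ys) \<longleftrightarrow> Z0 \<notin> set xs \<and> wf_stack ys"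
  unfolding wf_stack_def by (auto simp: butlast_append)

lemma pdc_structuralD:
  assumes "pdc_structural C"
  shows "finite (p_states C)" and "p_start C \<in> p_states C"
    and "q \<in> p_states C \<Longrightarrow> p_delta C q i a = Some (q', g) \<Longrightarrow> q' \<in> p_states C"
    and "p_delta C q i Z0 = Some (q', g) \<Longrightarrow> wf_stack g"
    and "a \<noteq> Z0 \<Longrightarrow> p_delta C q i a = Some (q', g) \<Longrightarrow> Z0 \<notin> set g"
    and "p_delta C q None a = Some (q', g) \<Longrightarrow> a \<noteq> Z0 \<and> g = []"
  using assms unfolding pdc_structural_def wf_stack_def by metis+

lemma pdc_structuralI:
  assumes "finite (p_states C)" and "p_start C \<in> p_states C"
    and "\<And>q i a q' g. q \<in> p_states C \<Longrightarrow> p_delta C q i a = Some (q', g) \<Longrightarrow> q' \<in> p_states C"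
    and "\<And>q i q' g. p_delta C q i Z0 = Some (q', g) \<Longrightarrow> wf_stack g"
    and "\<And>q i a q' g. a \<noteq> Z0 \<Longrightarrow> p_delta C q i a = Some (q', g) \<Longrightarrow> Z0 \<notin> set g"
    and "\<And>q a q' g. p_delta C q None a = Some (q', g) \<Longrightarrow> a \<noteq> Z0 \<and> g = []"
    and "\<And>q a. p_delta C q None a \<noteq> None \<Longrightarrow> p_nu C q None a = []"
    and "\<And>q a b. p_delta C q None a \<noteq> None \<Longrightarrow> p_delta C q (Some b) a = None"
  shows "pdc_structural C"
  using assms unfolding pdc_structural_def wf_stack_def by blast

definition unary_stack :: "pdc \<Rightarrow> bool" where
  "unary_stack C \<longleftrightarrow> (\<forall>q i a q' g. p_delta C q i a = Some (q', g) \<longrightarrow> S1 \<notin> set g)"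

lemma is_updc_iff_unary_stack: "is_updc C \<longleftrightarrow> is_pdc C \<and> unary_stack C"
  unfolding is_updc_def unary_stack_def by blast

section \<open>Runs from arbitrary configurations\<close>

lemma pdc_step_SomeE:
  assumes "pdc_step C i (q, s, out) = Some cfg'"
  obtains a rest q' g where "s = a # rest" "p_delta C q i a = Some (q', g)"
    "cfg' = (q', g @ rest, out @ p_nu C q i a)"
  using assms by (cases s) (auto split: option.splits)

definition pdc_input_step :: "pdc \<Rightarrow> bool \<Rightarrow> config \<Rightarrow> config option" where
  "pdc_input_step C b cfg =
     (case pdc_step C (Some b) cfg of
        None \<Rightarrow> None
      | Some cfg1 \<Rightarrow> (let cfg2 = lam_close C (p_c C) cfg1 in
                       if pdc_step C None cfg2 = None then Some cfg2 else None))"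

lemma pdc_input_step_SomeE:
  assumes "pdc_input_step C b cfg = Some cfg'"
  obtains cfg1 where "pdc_step C (Some b) cfg = Some cfg1" "cfg' = lam_close C (p_c C) cfg1"
    "pdc_step C None cfg' = None"
  using assms by (auto simp: pdc_input_step_def Let_def split: option.splits if_splits)

definition pdc_run_from :: "pdc \<Rightarrow> config option \<Rightarrow> bool list \<Rightarrow> config option" where
  "pdc_run_from C oc w =
     foldl (\<lambda>oc b. case oc of None \<Rightarrow> None | Some cfg \<Rightarrow> pdc_input_step C b cfg) oc w"

lemma pdc_run_eq_run_from: "pdc_run C w = pdc_run_from C (Some (p_start C, [Z0], [])) w"
  unfolding pdc_run_def pdc_run_from_def pdc_input_step_def by simp

lemma pdc_run_from_None [simp]: "pdc_run_from C None w = None"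
  by (induction w) (simp_all add: pdc_run_from_def)

lemma pdc_run_from_Nil [simp]: "pdc_run_from C oc [] = oc"
  by (simp add: pdc_run_from_def)

lemma pdc_run_from_Cons [simp]:
  "pdc_run_from C (Some cfg) (b # w) = pdc_run_from C (pdc_input_step C b cfg) w"
  by (simp add: pdc_run_from_def)

lemma pdc_run_from_append:
  "pdc_run_from C oc (w @ v) = pdc_run_from C (pdc_run_from C oc w) v"
  by (simp add: pdc_run_from_def)

section \<open>Runs that stay above a stack segment\<close>

fun extend_config :: "sym list \<Rightarrow> bool list \<Rightarrow> config \<Rightarrow> config" where
  "extend_config r ob (q, s, out) = (q, s @ r, ob @ out)"

lemma pdc_step_append_stack:
  "s \<noteq> [] \<Longrightarrow>
   pdc_step C i (q, s @ r, ob @ out) = map_option (extend_config r ob) (pdc_step C i (q, s, out))"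
  by (cases s) (auto split: option.split)

text \<open>A stack segment covers \<open>n\<close> pops if they can be performed, and a top symbol read
  afterwards, without looking below the segment.\<close>

definition stack_covers :: "nat \<Rightarrow> sym list \<Rightarrow> bool" where
  "stack_covers n s \<longleftrightarrow> Z0 \<in> set s \<or> n < length s"

lemma stack_covers_mono: "stack_covers m s \<Longrightarrow> n \<le> m \<Longrightarrow> stack_covers n s"
  unfolding stack_covers_def by auto

lemma stack_covers_nonempty: "stack_covers n s \<Longrightarrow> s \<noteq> []"
  unfolding stack_covers_def by auto

lemma stack_covers_pdc_step:
  assumes "pdc_structural C" and "pdc_step C i (q, s, out) = Some (q', s', out')"
    and "stack_covers (Suc n) s"
  shows "stack_covers n s'"
proof -
  obtain a rest g where s: "s = a # rest" and d: "p_delta C q i a = Some (q', g)"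
    and s': "s' = g @ rest"
    using assms(2) by (rule pdc_step_SomeE) auto
  show ?thesis
  proof (cases "a = Z0")
    case True
    then have "Z0 \<in> set g"
      using pdc_structuralD(4)[OF assms(1)] d last_in_set unfolding wf_stack_def by metis
    then show ?thesis using s' unfolding stack_covers_def by simp
  next
    case False
    then show ?thesis using assms(3) s s' unfolding stack_covers_def by auto
  qed
qed

lemma lam_close_append_stack:
  assumes "pdc_structural C" and "stack_covers (n + k) s"
    and "lam_close C k (q, s, out) = (q', s', out')"
  shows "lam_close C k (q, s @ r, ob @ out) = (q', s' @ r, ob @ out') \<and> stack_covers n s'"
  using assms(2,3)
proof (induction k arbitrary: q s out)
  case 0
  then show ?case by simp
next
  case (Suc k)
  have step: "pdc_step C None (q, s @ r, ob @ out) =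
      map_option (extend_config r ob) (pdc_step C None (q, s, out))"
    using Suc.prems(1) stack_covers_nonempty pdc_step_append_stack by blast
  show ?case
  proof (cases "pdc_step C None (q, s, out)")
    case None
    then show ?thesis using Suc.prems step stack_covers_mono[of "n + Suc k" s n] by simp
  next
    case (Some cfg1)
    obtain q1 s1 out1 where cfg1: "cfg1 = (q1, s1, out1)" by (cases cfg1)
    have "stack_covers (n + k) s1"
      using stack_covers_pdc_step[OF assms(1)] Suc.prems(1) Some cfg1 by simp
    then show ?thesis using Suc.IH Suc.prems(2) Some cfg1 step by simp
  qed
qed

lemma stack_covers_pdc_input_step:
  assumes "pdc_structural C" and "stack_covers (n + Suc (p_c C)) s"
    and "pdc_input_step C b (q, s, out) = Some (q', s', out')"
  shows "stack_covers n s'"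
proof -
  obtain cfg1 where step: "pdc_step C (Some b) (q, s, out) = Some cfg1"
    and lam: "(q', s', out') = lam_close C (p_c C) cfg1"
    using assms(3) by (rule pdc_input_step_SomeE)
  obtain q1 s1 out1 where cfg1: "cfg1 = (q1, s1, out1)" by (cases cfg1)
  have "stack_covers (n + p_c C) s1"
    using stack_covers_pdc_step[OF assms(1)] assms(2) step cfg1 by simp
  then show ?thesis using lam_close_append_stack[OF assms(1)] lam cfg1 by metis
qed

lemma pdc_input_step_append_stack:
  assumes "pdc_structural C" and "stack_covers (Suc (p_c C)) s"
  shows "pdc_input_step C b (q, s @ r, ob @ out) =
           map_option (extend_config r ob) (pdc_input_step C b (q, s, out))"
proof (cases "pdc_step C (Some b) (q, s, out)")
  case None
  then show ?thesis
    using assms(2) stack_covers_nonempty pdc_step_append_stack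
    by (fastforce simp: pdc_input_step_def)
next
  case (Some cfg1)
  obtain q1 s1 out1 where cfg1: "cfg1 = (q1, s1, out1)" by (cases cfg1)
  have step: "pdc_step C (Some b) (q, s @ r, ob @ out) = Some (q1, s1 @ r, ob @ out1)"
    using assms(2) stack_covers_nonempty pdc_step_append_stack Some cfg1 by fastforce
  have "stack_covers (p_c C) s1"
    using stack_covers_pdc_step[OF assms(1)] assms(2) Some cfg1 by simp
  moreover obtain q2 s2 out2 where lam: "lam_close C (p_c C) (q1, s1, out1) = (q2, s2, out2)"
    by (cases "lam_close C (p_c C) (q1, s1, out1)")
  ultimately have lam': "lam_close C (p_c C) (q1, s1 @ r, ob @ out1) = (q2, s2 @ r, ob @ out2)"
    and "stack_covers 0 s2"
    using lam_close_append_stack[OF assms(1), where n = 0] by simp_all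
  then have "pdc_step C None (q2, s2 @ r, ob @ out2) =
      map_option (extend_config r ob) (pdc_step C None (q2, s2, out2))"
    using stack_covers_nonempty pdc_step_append_stack by blast
  then show ?thesis
    using Some cfg1 step lam lam' by (auto simp: pdc_input_step_def Let_def)
qed

text \<open>Reading \<open>u\<close> pops at most \<open>length u * Suc (p_c C)\<close> symbols.\<close>

lemma pdc_run_from_append_stack:
  assumes "pdc_structural C" and "stack_covers (length u * Suc (p_c C)) s"
  shows "pdc_run_from C (Some (q, s @ r, ob @ out)) u =
           map_option (extend_config r ob) (pdc_run_from C (Some (q, s, out)) u)"
  using assms(2)
proof (induction u arbitrary: q s out)
  case Nil
  then show ?case by simp
next
  case (Cons b u)
  then have covers: "stack_covers (length u * Suc (p_c C) + Suc (p_c C)) s"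
    by (simp add: algebra_simps)
  have step: "pdc_input_step C b (q, s @ r, ob @ out) =
      map_option (extend_config r ob) (pdc_input_step C b (q, s, out))"
    using pdc_input_step_append_stack[OF assms(1)] stack_covers_mono[OF covers] by simp
  show ?case
  proof (cases "pdc_input_step C b (q, s, out)")
    case None
    then show ?thesis using step by simp
  next
    case (Some cfg')
    obtain q' s' out' where cfg': "cfg' = (q', s', out')" by (cases cfg')
    then have "stack_covers (length u * Suc (p_c C)) s'"
      using stack_covers_pdc_input_step[OF assms(1) covers] Some by blast
    then show ?thesis using Cons.IH step Some cfg' by simp
  qed
qed

lemma lam_close_invariant:
  assumes "\<And>cfg cfg'. P cfg \<Longrightarrow> pdc_step C None cfg = Some cfg' \<Longrightarrow> P cfg'"
  shows "P cfg \<Longrightarrow> P (lam_close C k cfg)"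
proof (induction k arbitrary: cfg)
  case 0
  then show ?case by simp
next
  case (Suc k)
  then show ?case using assms by (cases "pdc_step C None cfg") auto
qed

lemma pdc_run_from_invariant:
  assumes "\<And>i cfg cfg'. P cfg \<Longrightarrow> pdc_step C i cfg = Some cfg' \<Longrightarrow> P cfg'"
  shows "P cfg \<Longrightarrow> pdc_run_from C (Some cfg) w = Some cfg' \<Longrightarrow> P cfg'"
proof (induction w arbitrary: cfg)
  case Nil
  then show ?case by simp
next
  case (Cons b w)
  show ?case
  proof (cases "pdc_input_step C b cfg")
    case None
    then show ?thesis using Cons.prems by simp
  next
    case (Some cfg1)
    then obtain cfg0 where "pdc_step C (Some b) cfg = Some cfg0"
      and cfg1: "cfg1 = lam_close C (p_c C) cfg0"
      by (rule pdc_input_step_SomeE)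
    then have "P cfg0" using Cons.prems(1) assms by blast
    then have "P cfg1" using lam_close_invariant[of P C] assms unfolding cfg1 by blast
    then show ?thesis using Cons.IH Cons.prems(2) Some by simp
  qed
qed

lemma pdc_run_from_state_closed:
  assumes "pdc_structural C" and "p \<in> p_states C"
    and "pdc_run_from C (Some (p, s, out)) w = Some (p', s', out')"
  shows "p' \<in> p_states C"
proof -
  have "fst cfg' \<in> p_states C"
    if "fst cfg \<in> p_states C" and "pdc_step C i cfg = Some cfg'" for i cfg cfg'
  proof -
    obtain q s out where cfg: "cfg = (q, s, out)" by (cases cfg)
    from that(2)[unfolded cfg] obtain a rest q'' g where d: "p_delta C q i a = Some (q'', g)"
      and cfg': "cfg' = (q'', g @ rest, out @ p_nu C q i a)"
      by (rule pdc_step_SomeE)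
    have "q \<in> p_states C" using that(1) cfg by simp
    then show ?thesis using pdc_structuralD(3)[OF assms(1) _ d] cfg' by simp
  qed
  then show ?thesis
    using pdc_run_from_invariant[where P = "\<lambda>cfg. fst cfg \<in> p_states C"] assms(2,3)
    by (metis fst_conv)
qed

lemma wf_stack_pdc_step:
  assumes "pdc_structural C" and "pdc_step C i (q, s, out) = Some (q', s', out')"
    and "wf_stack s"
  shows "wf_stack s'"
proof -
  obtain a rest g where s: "s = a # rest" and d: "p_delta C q i a = Some (q', g)"
    and s': "s' = g @ rest"
    using assms(2) by (rule pdc_step_SomeE) auto
  show ?thesis
  proof (cases "a = Z0")
    case True
    then show ?thesis
      using pdc_structuralD(4)[OF assms(1)] assms(3) d s s' wf_stack_Cons_iff by auto
  next
    case False
    then have "wf_stack rest" "Z0 \<notin> set g"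
      using pdc_structuralD(5)[OF assms(1)] assms(3) d s wf_stack_Cons_iff by auto
    moreover from \<open>wf_stack rest\<close> have "rest \<noteq> []" by (simp add: wf_stack_def)
    ultimately show ?thesis using s' wf_stack_append by simp
  qed
qed

lemma unary_stack_pdc_step:
  assumes "unary_stack C" and "pdc_step C i (q, s, out) = Some (q', s', out')"
    and "S1 \<notin> set s"
  shows "S1 \<notin> set s'"
  using assms(2)
proof (rule pdc_step_SomeE)
  fix a rest q'' g
  assume "s = a # rest" and "p_delta C q i a = Some (q'', g)"
    and "(q', s', out') = (q'', g @ rest, out @ p_nu C q i a)"
  then show ?thesis using assms(1,3) unfolding unary_stack_def by auto
qed

lemma pdc_run_wf_stack:
  assumes "pdc_structural C" and "pdc_run C w = Some (p, s, out)"
  shows "wf_stack s" and "unary_stack C \<Longrightarrow> S1 \<notin> set s"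
proof -
  let ?P = "\<lambda>cfg :: config. wf_stack (fst (snd cfg)) \<and> (unary_stack C \<longrightarrow> S1 \<notin> set (fst (snd cfg)))"
  have step: "?P cfg'" if "?P cfg" and "pdc_step C i cfg = Some cfg'" for i cfg cfg'
  proof -
    obtain q s out q' s' out' where "cfg = (q, s, out)" and "cfg' = (q', s', out')"
      by (cases cfg, cases cfg')
    then show ?thesis
      using that wf_stack_pdc_step[OF assms(1), of i q s out q' s' out']
        unary_stack_pdc_step[of C i q s out q' s' out'] by simp
  qed
  have start: "?P (p_start C, [Z0], [])" by (simp add: wf_stack_def)
  from assms(2) have "pdc_run_from C (Some (p_start C, [Z0], [])) w = Some (p, s, out)"
    by (simp add: pdc_run_eq_run_from)
  then have "?P (p, s, out)"
    using pdc_run_from_invariant[of ?P C "(p_start C, [Z0], [])" w "(p, s, out)"] step start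
    by blast
  then show "wf_stack s" and "unary_stack C \<Longrightarrow> S1 \<notin> set s" by simp_all
qed

lemma fst_run_snoc:
  "fst_run T (x @ [b]) = (f_delta T (fst_state T x) b, fst_out T x @ f_nu T (fst_state T x) b)"
  unfolding fst_run_def fst_state_def fst_out_def by (simp split: prod.split)

lemma fst_state_Nil [simp]: "fst_state T [] = f_start T"
  by (simp add: fst_state_def fst_run_def)

lemma fst_out_Nil [simp]: "fst_out T [] = []"
  by (simp add: fst_out_def fst_run_def)

lemma fst_state_snoc [simp]: "fst_state T (x @ [b]) = f_delta T (fst_state T x) b"
  by (simp add: fst_state_def fst_run_snoc)

lemma fst_out_snoc [simp]: "fst_out T (x @ [b]) = fst_out T x @ f_nu T (fst_state T x) b"
  by (simp add: fst_out_def fst_run_snoc)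

lemma fst_state_in_states: "fst_wf T \<Longrightarrow> fst_state T x \<in> f_states T"
  by (induction x rule: rev_induct) (simp_all add: fst_wf_def)

definition fst_max_out :: "fst \<Rightarrow> nat" where
  "fst_max_out T = Max ((\<lambda>(q, b). length (f_nu T q b)) ` (f_states T \<times> UNIV))"

lemma length_f_nu_le_max_out:
  "fst_wf T \<Longrightarrow> t \<in> f_states T \<Longrightarrow> length (f_nu T t b) \<le> fst_max_out T"
  unfolding fst_max_out_def fst_wf_def by (rule Max_ge) auto

section \<open>The composed compressor\<close>

text \<open>While reading one output block of \<open>T\<close>, \<open>C\<close> pops at most one symbol per bit and
  \<open>p_c C\<close> more by lambda-transitions after each bit.\<close>

definition buffer_size :: "pdc \<Rightarrow> fst \<Rightarrow> nat" where
  "buffer_size C T = fst_max_out T * Suc (p_c C)"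

definition admissible_push :: "pdc \<Rightarrow> sym \<Rightarrow> sym list \<Rightarrow> bool" where
  "admissible_push C a g \<longleftrightarrow>
     (if a = Z0 then wf_stack g else Z0 \<notin> set g) \<and> (unary_stack C \<longrightarrow> S1 \<notin> set g)"

text \<open>The fallback is never taken on reachable configurations; it only makes the composed
  machine satisfy the structural conditions everywhere.\<close>

definition block_result ::
    "pdc \<Rightarrow> fst \<Rightarrow> nat \<Rightarrow> nat \<Rightarrow> sym list \<Rightarrow> bool \<Rightarrow> sym \<Rightarrow> nat \<times> sym list \<times> bool list" where
  "block_result C T t p buf b a =
     (let fallback = (p, if a = Z0 then [Z0] else [], []) in
      case pdc_run_from C (Some (p, buf @ [a], [])) (f_nu T t b) of
        None \<Rightarrow> fallback
      | Some (p', g, out) \<Rightarrow> if admissible_push C a g then (p', g, out) else fallback)"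

text \<open>A state of the composed machine encodes a triple \<open>(t, p, buf)\<close>: the states of \<open>T\<close> and
  \<open>C\<close>, and a buffer with the topmost symbols of the stack of \<open>C\<close>, the rest of which is the
  stack of the composed machine.\<close>

definition compose_pdc :: "pdc \<Rightarrow> fst \<Rightarrow> pdc" where
  "compose_pdc C T =
     \<lparr>p_states =
        to_nat ` (f_states T \<times> p_states C \<times> {buf :: sym list. length buf \<le> buffer_size C T}),
      p_start = to_nat (f_start T, p_start C, [] :: sym list),
      p_delta = (\<lambda>q i a. case from_nat q of (t, p, buf) \<Rightarrow>
        (case i of
           None \<Rightarrow>
             if a \<noteq> Z0 \<and> length buf < buffer_size C T
             then Some (to_nat (t, p, buf @ [a]), []) else None
         | Some b \<Rightarrow>
             if a \<noteq> Z0 \<and> length buf < buffer_size C T then None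
             else Some (to_nat (f_delta T t b, fst (block_result C T t p buf b a), [] :: sym list),
                        fst (snd (block_result C T t p buf b a))))),
      p_nu = (\<lambda>q i a. case from_nat q of (t, p, buf) \<Rightarrow>
        (case i of None \<Rightarrow> [] | Some b \<Rightarrow> snd (snd (block_result C T t p buf b a)))),
      p_c = buffer_size C T\<rparr>"

lemma compose_pdc_simps [simp]:
  "p_states (compose_pdc C T) =
     to_nat ` (f_states T \<times> p_states C \<times> {buf :: sym list. length buf \<le> buffer_size C T})"
  "p_start (compose_pdc C T) = to_nat (f_start T, p_start C, [] :: sym list)"
  "p_c (compose_pdc C T) = buffer_size C T"
  "p_nu (compose_pdc C T) q None a = []"
  by (simp_all add: compose_pdc_def split: prod.split)

lemma compose_pdc_delta_None:
  "from_nat q = (t :: nat, p :: nat, buf :: sym list) \<Longrightarrow> p_delta (compose_pdc C T) q None a =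
     (if a \<noteq> Z0 \<and> length buf < buffer_size C T then Some (to_nat (t, p, buf @ [a]), []) else None)"
  by (simp add: compose_pdc_def)

lemma compose_pdc_delta_Some:
  "from_nat q = (t :: nat, p :: nat, buf :: sym list) \<Longrightarrow> p_delta (compose_pdc C T) q (Some b) a =
     (if a \<noteq> Z0 \<and> length buf < buffer_size C T then None
      else Some (to_nat (f_delta T t b, fst (block_result C T t p buf b a), [] :: sym list),
                 fst (snd (block_result C T t p buf b a))))"
  by (simp add: compose_pdc_def)

lemma compose_pdc_nu_Some:
  "from_nat q = (t :: nat, p :: nat, buf :: sym list) \<Longrightarrow>
   p_nu (compose_pdc C T) q (Some b) a = snd (snd (block_result C T t p buf b a))"
  by (simp add: compose_pdc_def)

lemmas compose_pdc_transitions =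
  compose_pdc_delta_None[OF from_nat_to_nat] compose_pdc_delta_Some[OF from_nat_to_nat]
  compose_pdc_nu_Some[OF from_nat_to_nat]

lemma admissible_block_result: "admissible_push C a (fst (snd (block_result C T t p buf b a)))"
proof -
  have "admissible_push C a (if a = Z0 then [Z0] else [])"
    by (simp add: admissible_push_def wf_stack_def)
  then show ?thesis by (auto simp: block_result_def Let_def split: option.split)
qed

lemma block_result_state_closed:
  "pdc_structural C \<Longrightarrow> p \<in> p_states C \<Longrightarrow> fst (block_result C T t p buf b a) \<in> p_states C"
  using pdc_run_from_state_closed by (auto simp: block_result_def Let_def split: option.split)

lemma compose_pdc_push:
  assumes "p_delta (compose_pdc C T) q i a = Some (q', g)"
  shows "admissible_push C a g" and "i = None \<Longrightarrow> a \<noteq> Z0 \<and> g = []"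
proof -
  obtain t p :: nat and buf :: "sym list" where q: "from_nat q = (t, p, buf)"
    by (cases "from_nat q :: nat \<times> nat \<times> sym list")
  have "admissible_push C a g \<and> (i = None \<longrightarrow> a \<noteq> Z0 \<and> g = [])"
  proof (cases i)
    case None
    then show ?thesis
      using assms compose_pdc_delta_None[OF q]
      by (auto simp: admissible_push_def split: if_splits)
  next
    case (Some b)
    then show ?thesis
      using assms compose_pdc_delta_Some[OF q] admissible_block_result by (auto split: if_splits)
  qed
  then show "admissible_push C a g" and "i = None \<Longrightarrow> a \<noteq> Z0 \<and> g = []" by auto
qed

lemma compose_pdc_state_closed:
  assumes "pdc_structural C" and "fst_wf T" and "q \<in> p_states (compose_pdc C T)"
    and "p_delta (compose_pdc C T) q i a = Some (q', g)"
  shows "q' \<in> p_states (compose_pdc C T)"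
proof -
  obtain t p :: nat and buf :: "sym list" where q: "q = to_nat (t, p, buf)" and t: "t \<in> f_states T"
    and p: "p \<in> p_states C" and buf: "length buf \<le> buffer_size C T"
    using assms(3) by auto
  show ?thesis
  proof (cases i)
    case None
    then show ?thesis
      using assms(4) compose_pdc_delta_None[of q t p buf] q t p by (auto split: if_splits)
  next
    case (Some b)
    have "f_delta T t b \<in> f_states T" using assms(2) t by (simp add: fst_wf_def)
    then show ?thesis
      using assms(4) compose_pdc_delta_Some[of q t p buf] q Some p
        block_result_state_closed[OF assms(1) p]
      by (auto split: if_splits)
  qed
qed

lemma compose_pdc_structural:
  assumes "pdc_structural C" and "fst_wf T"
  shows "pdc_structural (compose_pdc C T)"
proof (rule pdc_structuralI)
  have "finite {buf :: sym list. length buf \<le> buffer_size C T}"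
    using finite_lists_length_le[OF finite_UNIV] by simp
  then show "finite (p_states (compose_pdc C T))"
    using assms pdc_structuralD(1) by (simp add: fst_wf_def)
  show "p_start (compose_pdc C T) \<in> p_states (compose_pdc C T)"
    using assms by (simp add: pdc_structuralD(2) fst_wf_def inj_image_mem_iff)
  show "\<And>q i a q' g. q \<in> p_states (compose_pdc C T) \<Longrightarrow>
      p_delta (compose_pdc C T) q i a = Some (q', g) \<Longrightarrow> q' \<in> p_states (compose_pdc C T)"
    using compose_pdc_state_closed[OF assms] by blast
  show "\<And>q i q' g. p_delta (compose_pdc C T) q i Z0 = Some (q', g) \<Longrightarrow> wf_stack g"
    using compose_pdc_push(1) unfolding admissible_push_def by fastforce
  show "\<And>q i a q' g. a \<noteq> Z0 \<Longrightarrow> p_delta (compose_pdc C T) q i a = Some (q', g) \<Longrightarrow>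
      Z0 \<notin> set g"
    using compose_pdc_push(1) unfolding admissible_push_def by fastforce
  show "\<And>q a q' g. p_delta (compose_pdc C T) q None a = Some (q', g) \<Longrightarrow> a \<noteq> Z0 \<and> g = []"
    using compose_pdc_push(2) by blast
  show "\<And>q a. p_delta (compose_pdc C T) q None a \<noteq> None \<Longrightarrow> p_nu (compose_pdc C T) q None a = []"
    by simp
  show "p_delta (compose_pdc C T) q (Some b) a = None"
    if "p_delta (compose_pdc C T) q None a \<noteq> None" for q a b
  proof -
    obtain t p :: nat and buf :: "sym list" where "from_nat q = (t, p, buf)"
      by (cases "from_nat q :: nat \<times> nat \<times> sym list")
    then show ?thesis
      using that compose_pdc_delta_None compose_pdc_delta_Some by (auto split: if_splits)
  qed
qed

lemma unary_stack_compose_pdc: "unary_stack C \<Longrightarrow> unary_stack (compose_pdc C T)"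
  using compose_pdc_push(1) unfolding unary_stack_def admissible_push_def by blast

section \<open>Simulation\<close>

text \<open>The configurations of the composed machine in which no lambda-transition applies.\<close>

definition buffer_loaded :: "nat \<Rightarrow> sym list \<Rightarrow> sym list \<Rightarrow> bool" where
  "buffer_loaded M buf stk \<longleftrightarrow>
     length buf \<le> M \<and> (length buf = M \<or> hd stk = Z0) \<and> Z0 \<in> set stk"

lemma compose_pdc_lam_close:
  fixes t p :: nat
  assumes "Z0 \<in> set stk" and "length buf \<le> buffer_size C T"
    and "buffer_size C T \<le> k + length buf"
  shows "\<exists>buf' stk'.
    lam_close (compose_pdc C T) k (to_nat (t, p, buf), stk, out) =
      (to_nat (t, p, buf'), stk', out) \<and>
    buf @ stk = buf' @ stk' \<and> buffer_loaded (buffer_size C T) buf' stk'"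
  using assms
proof (induction k arbitrary: buf stk)
  case 0
  then show ?case unfolding buffer_loaded_def by auto
next
  case (Suc k)
  obtain a rest where stk: "stk = a # rest" using Suc.prems(1) by (cases stk) auto
  show ?case
  proof (cases "a \<noteq> Z0 \<and> length buf < buffer_size C T")
    case False
    then have "pdc_step (compose_pdc C T) None (to_nat (t, p, buf), stk, out) = None"
      using stk by (simp add: compose_pdc_transitions)
    then show ?thesis using False stk Suc.prems unfolding buffer_loaded_def by auto
  next
    case True
    then have "pdc_step (compose_pdc C T) None (to_nat (t, p, buf), stk, out) =
        Some (to_nat (t, p, buf @ [a]), rest, out)"
      using stk by (simp add: compose_pdc_transitions)
    moreover have "\<exists>buf' stk'.
      lam_close (compose_pdc C T) k (to_nat (t, p, buf @ [a]), rest, out) =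
        (to_nat (t, p, buf'), stk', out) \<and>
      (buf @ [a]) @ rest = buf' @ stk' \<and> buffer_loaded (buffer_size C T) buf' stk'"
      using Suc.IH[of rest "buf @ [a]"] Suc.prems True stk by auto
    ultimately show ?thesis using stk by auto
  qed
qed

lemma compose_pdc_no_lambda:
  fixes t p :: nat
  assumes "buffer_loaded (buffer_size C T) buf stk"
  shows "pdc_step (compose_pdc C T) None (to_nat (t, p, buf), stk, out) = None"
proof -
  obtain a rest where "stk = a # rest"
    using assms unfolding buffer_loaded_def by (cases stk) auto
  then show ?thesis using assms by (auto simp: buffer_loaded_def compose_pdc_transitions)
qed

lemma admissible_push_of_wf_stack:
  assumes "wf_stack (buf @ a # rest)" and "wf_stack (g @ rest)"
    and "unary_stack C \<Longrightarrow> S1 \<notin> set (g @ rest)"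
  shows "admissible_push C a g"
proof -
  have top: "wf_stack (a # rest)" using assms(1) wf_stack_append by blast
  have "if a = Z0 then wf_stack g else Z0 \<notin> set g"
  proof (cases "a = Z0")
    case True
    then show ?thesis using top assms(2) by (simp add: wf_stack_Cons_iff)
  next
    case False
    then have "wf_stack rest" using top by (simp add: wf_stack_Cons_iff)
    moreover from this have "rest \<noteq> []" by (simp add: wf_stack_def)
    ultimately show ?thesis using False assms(2) wf_stack_append by simp
  qed
  then show ?thesis using assms(3) unfolding admissible_push_def by auto
qed

lemma block_result_simulates:
  assumes "pdc_structural C" and "fst_wf T" and "t \<in> f_states T"
    and "buffer_loaded (buffer_size C T) buf (a # rest)"
    and "pdc_run C v = Some (p, buf @ a # rest, out)"
    and "pdc_run C (v @ f_nu T t b) = Some (p', stk', out')"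
  shows "\<exists>g ob. block_result C T t p buf b a = (p', g, ob) \<and> stk' = g @ rest \<and> out' = out @ ob"
proof -
  let ?u = "f_nu T t b"
  have covers: "stack_covers (length ?u * Suc (p_c C)) (buf @ [a])"
  proof (cases "a = Z0")
    case False
    then have "length buf = buffer_size C T" using assms(4) unfolding buffer_loaded_def by simp
    moreover have "length ?u * Suc (p_c C) \<le> buffer_size C T"
      unfolding buffer_size_def using length_f_nu_le_max_out[OF assms(2,3)] by (rule mult_le_mono1)
    ultimately show ?thesis unfolding stack_covers_def by simp
  qed (simp add: stack_covers_def)
  have "pdc_run C (v @ ?u) = pdc_run_from C (Some (p, (buf @ [a]) @ rest, out @ [])) ?u"
    using assms(5) unfolding pdc_run_eq_run_from pdc_run_from_append by simp
  also have "\<dots> = map_option (extend_config rest out) (pdc_run_from C (Some (p, buf @ [a], [])) ?u)"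
    by (rule pdc_run_from_append_stack[OF assms(1) covers])
  finally have sim: "Some (p', stk', out') =
      map_option (extend_config rest out) (pdc_run_from C (Some (p, buf @ [a], [])) ?u)"
    using assms(6) by simp
  then obtain cfg where run: "pdc_run_from C (Some (p, buf @ [a], [])) ?u = Some cfg"
    by (cases "pdc_run_from C (Some (p, buf @ [a], [])) ?u") auto
  obtain q g ob where cfg: "cfg = (q, g, ob)" by (cases cfg)
  have "q = p'" and stk': "stk' = g @ rest" and out': "out' = out @ ob"
    using sim run cfg by auto
  have "admissible_push C a g"
    using admissible_push_of_wf_stack pdc_run_wf_stack[OF assms(1)] assms(5,6) stk' by metis
  then show ?thesis using run cfg \<open>q = p'\<close> stk' out' by (simp add: block_result_def)
qed

lemma compose_pdc_input_step:
  assumes "pdc_structural C" and "fst_wf T" and "t \<in> f_states T"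
    and "buffer_loaded (buffer_size C T) buf stk"
    and "pdc_run C v = Some (p, buf @ stk, out)"
    and "pdc_run C (v @ f_nu T t b) = Some (p', stk', out')"
  shows "\<exists>buf' stk''.
    pdc_input_step (compose_pdc C T) b (to_nat (t, p, buf), stk, out) =
      Some (to_nat (f_delta T t b, p', buf'), stk'', out') \<and>
    stk' = buf' @ stk'' \<and> buffer_loaded (buffer_size C T) buf' stk''"
proof -
  let ?N = "compose_pdc C T" and ?M = "buffer_size C T" and ?t' = "f_delta T t b"
  obtain a rest where stk: "stk = a # rest"
    using assms(4) unfolding buffer_loaded_def by (cases stk) auto
  obtain g ob where block: "block_result C T t p buf b a = (p', g, ob)"
    and stk': "stk' = g @ rest" and out': "out' = out @ ob"
    using block_result_simulates[OF assms(1-3)] assms(4-6) stk by blast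
  have "\<not> (a \<noteq> Z0 \<and> length buf < ?M)"
    using assms(4) stk unfolding buffer_loaded_def by auto
  then have step: "pdc_step ?N (Some b) (to_nat (t, p, buf), stk, out) =
      Some (to_nat (?t', p', [] :: sym list), stk', out')"
    using stk stk' out' block by (simp add: compose_pdc_transitions)
  have "Z0 \<in> set stk'"
    using pdc_run_wf_stack(1)[OF assms(1,6)] last_in_set unfolding wf_stack_def by metis
  then have "\<exists>buf' stk''.
      lam_close ?N ?M (to_nat (?t', p', [] :: sym list), stk', out') =
        (to_nat (?t', p', buf'), stk'', out') \<and>
      stk' = buf' @ stk'' \<and> buffer_loaded ?M buf' stk''"
    using compose_pdc_lam_close[of stk' "[]" C T ?M ?t' p' out'] by simp
  then obtain buf' stk'' where
    lam: "lam_close ?N ?M (to_nat (?t', p', [] :: sym list), stk', out') =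
      (to_nat (?t', p', buf'), stk'', out')"
    and split: "stk' = buf' @ stk''" and loaded: "buffer_loaded ?M buf' stk''"
    by blast
  have "pdc_step ?N None (to_nat (?t', p', buf'), stk'', out') = None"
    using loaded by (rule compose_pdc_no_lambda)
  then show ?thesis
    using step lam split loaded by (simp add: pdc_input_step_def)
qed

lemma compose_pdc_run:
  assumes "is_pdc C" and "fst_wf T"
  shows "\<exists>p buf stk out.
    pdc_run (compose_pdc C T) x = Some (to_nat (fst_state T x, p, buf), stk, out) \<and>
    pdc_run C (fst_out T x) = Some (p, buf @ stk, out) \<and>
    buffer_loaded (buffer_size C T) buf stk"
proof (induction x rule: rev_induct)
  case Nil
  show ?case by (simp add: pdc_run_def buffer_loaded_def)
next
  case (snoc b x)
  let ?t = "fst_state T x"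
  obtain p buf stk out where
    runN: "pdc_run (compose_pdc C T) x = Some (to_nat (?t, p, buf), stk, out)"
    and runC: "pdc_run C (fst_out T x) = Some (p, buf @ stk, out)"
    and loaded: "buffer_loaded (buffer_size C T) buf stk"
    using snoc.IH by blast
  obtain p' stk' out' where
    runC': "pdc_run C (fst_out T x @ f_nu T ?t b) = Some (p', stk', out')"
    using assms(1) unfolding is_pdc_def by (metis not_None_eq prod_cases3)
  obtain buf' stk'' where
    "pdc_input_step (compose_pdc C T) b (to_nat (?t, p, buf), stk, out) =
       Some (to_nat (f_delta T ?t b, p', buf'), stk'', out')"
    and "stk' = buf' @ stk''" and "buffer_loaded (buffer_size C T) buf' stk''"
    using compose_pdc_input_step[OF _ assms(2) fst_state_in_states[OF assms(2)] loaded runC runC']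
      assms(1) unfolding is_pdc_def by blast
  with runN runC' show ?case
    by (fastforce simp: pdc_run_eq_run_from pdc_run_from_append)
qed

lemma compose_pdc_out:
  assumes "is_pdc C" and "fst_wf T"
  shows "pdc_out (compose_pdc C T) x = pdc_out C (fst_out T x)"
  using compose_pdc_run[OF assms, of x] by (auto simp: pdc_out_def)

lemma compose_pdc_state:
  assumes "is_pdc C" and "fst_wf T"
  obtains buf :: "sym list" where
    "pdc_state (compose_pdc C T) x = to_nat (fst_state T x, pdc_state C (fst_out T x), buf)"
  using compose_pdc_run[OF assms, of x] that by (auto simp: pdc_state_def)

lemma is_pdc_compose_pdc: "is_pdc C \<Longrightarrow> fst_wf T \<Longrightarrow> is_pdc (compose_pdc C T)"
  using compose_pdc_structural compose_pdc_run unfolding is_pdc_def by fastforce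

lemma inj_compose_pdc:
  assumes "is_pdc C" and "ILFST T" and injC: "inj (\<lambda>w. (pdc_out C w, pdc_state C w))"
  shows "inj (\<lambda>x. (pdc_out (compose_pdc C T) x, pdc_state (compose_pdc C T) x))"
proof (rule injI)
  fix x y
  assume eq: "(pdc_out (compose_pdc C T) x, pdc_state (compose_pdc C T) x) =
    (pdc_out (compose_pdc C T) y, pdc_state (compose_pdc C T) y)"
  have T: "fst_wf T" and injT: "inj (\<lambda>x. (fst_out T x, fst_state T x))"
    using assms(2) unfolding ILFST_def by auto
  obtain buf_x buf_y :: "sym list" where
    "pdc_state (compose_pdc C T) x = to_nat (fst_state T x, pdc_state C (fst_out T x), buf_x)"
    "pdc_state (compose_pdc C T) y = to_nat (fst_state T y, pdc_state C (fst_out T y), buf_y)"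
    using compose_pdc_state[OF assms(1) T] by metis
  with eq have states: "fst_state T x = fst_state T y"
    "pdc_state C (fst_out T x) = pdc_state C (fst_out T y)"
    by simp_all
  moreover have "pdc_out C (fst_out T x) = pdc_out C (fst_out T y)"
    using eq compose_pdc_out[OF assms(1) T] by simp
  ultimately have "fst_out T x = fst_out T y" using injD[OF injC] by simp
  then show "x = y" using injD[OF injT] states(1) by simp
qed

lemma ILPDC_compose_pdc: "ILPDC C \<Longrightarrow> ILFST T \<Longrightarrow> ILPDC (compose_pdc C T)"
  using is_pdc_compose_pdc inj_compose_pdc unfolding ILPDC_def ILFST_def by blast

lemma ILUPDC_compose_pdc: "ILUPDC C \<Longrightarrow> ILFST T \<Longrightarrow> ILUPDC (compose_pdc C T)"
  using is_pdc_compose_pdc inj_compose_pdc unary_stack_compose_pdc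
  unfolding ILUPDC_def ILFST_def is_updc_iff_unary_stack by blast

theorem mainTheorem2:
  shows "(\<forall>C T. ILPDC C \<and> ILFST T \<longrightarrow>
            (\<exists>N. ILPDC N \<and> (\<forall>x. pdc_out N x = pdc_out C (fst_out T x)))) \<and>
         (\<forall>C T. ILUPDC C \<and> ILFST T \<longrightarrow>
            (\<exists>N. ILUPDC N \<and> (\<forall>x. pdc_out N x = pdc_out C (fst_out T x))))"
proof (intro conjI allI impI)
  fix C T
  assume "ILPDC C \<and> ILFST T"
  moreover from this have "is_pdc C" and "fst_wf T"
    unfolding ILPDC_def ILFST_def by simp_all
  ultimately show "\<exists>N. ILPDC N \<and> (\<forall>x. pdc_out N x = pdc_out C (fst_out T x))"
    using ILPDC_compose_pdc compose_pdc_out by blast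
next
  fix C T
  assume "ILUPDC C \<and> ILFST T"
  moreover from this have "is_pdc C" and "fst_wf T"
    unfolding ILUPDC_def is_updc_def ILFST_def by simp_all
  ultimately show "\<exists>N. ILUPDC N \<and> (\<forall>x. pdc_out N x = pdc_out C (fst_out T x))"
    using ILUPDC_compose_pdc compose_pdc_out by blast
qed

end
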